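(* Let $X$ be a connected, locally connected Hausdorff topological space, $V$ a locally convex topological vector space, and $f:X\to V$ a continuous map that has local convexity data. Assume that $f$ has connected fibers and that $f:X\to f(X)$ is a closed map (with $f(X)$ carrying the subspace topology). Then $f$ is open onto its image $f(X)$ and $f(X)$ is locally convex. If moreover $f(X)$ is closed in $V$, then $f(X)$ is convex.
   Context: A subset $C\subset V$ is a cone with vertex $v_0$ if $v_0\in C$ and $(1-\lambda)v_0+\lambda v\in C$ for every $\lambda\ge 0$ and every $v\in C$, $v\ne v_0$; it is a convex cone if it is moreover convex. A continuous map $f:X\to V$ has local convexity data if for each $x\in X$ and every sufficiently small open neighborhood $U_x$ of $x$ there is a convex cone $C_x\subset V$ with vertex $f(x)$, endowed with the subspace topology from $V$, such that (VN) $f(U_x)\subset C_x$ and $f(U_x)$ is a neighborhood of $f(x)$ in $C_x$; and (SLO) $f|_{U_x}:U_x\to C_x$ is an open map, and for every neighborhood $U'_x\subset U_x$ of $x$ the set $f(U'_x)$ is a neighborhood of $f(x)$ in $C_x$. A subset $Y\subset V$ is locally convex if every $y\in Y$ has a neighborhood $N$ in $V$ with $N\cap Y$ convex. "Open onto its image" means $f:X\to f(X)$ is open for the subspace topology on $f(X)$. *)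

theory Defs
  imports "HOL-Analysis.Analysis"
begin

definition locally_convex_tvs :: "'a::{real_vector,t2_space} itself \<Rightarrow> bool" where
  "locally_convex_tvs _ \<longleftrightarrow>
     continuous_on UNIV (\<lambda>p::'a \<times> 'a. fst p + snd p) \<and>
     continuous_on UNIV (\<lambda>p::real \<times> 'a. fst p *\<^sub>R snd p) \<and>
     (\<forall>x U. open U \<and> x \<in> U \<longrightarrow> (\<exists>W::'a set. open W \<and> convex W \<and> x \<in> W \<and> W \<subseteq> U))"

definition cone_with_vertex :: "'v::real_vector set \<Rightarrow> 'v \<Rightarrow> bool" where
  "cone_with_vertex C v0 \<longleftrightarrow> v0 \<in> C \<and>
     (\<forall>l::real. l \<ge> 0 \<longrightarrow> (\<forall>v\<in>C. v \<noteq> v0 \<longrightarrow> (1 - l) *\<^sub>R v0 + l *\<^sub>R v \<in> C))"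

definition convex_cone_with_vertex :: "'v::real_vector set \<Rightarrow> 'v \<Rightarrow> bool" where
  "convex_cone_with_vertex C v0 \<longleftrightarrow> cone_with_vertex C v0 \<and> convex C"

definition nbhd_in :: "'a topology \<Rightarrow> 'a set \<Rightarrow> 'a \<Rightarrow> bool" where
  "nbhd_in T N p \<longleftrightarrow> (\<exists>W. openin T W \<and> p \<in> W \<and> W \<subseteq> N)"

definition local_convexity_data :: "('x::topological_space \<Rightarrow> 'v::{real_vector,topological_space}) \<Rightarrow> bool" where
  "local_convexity_data f \<longleftrightarrow>
    (\<forall>x. \<exists>N. open N \<and> x \<in> N \<and>
      (\<forall>U. open U \<and> x \<in> U \<and> U \<subseteq> N \<longrightarrow>
        (\<exists>C. convex_cone_with_vertex C (f x) \<and>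
             f ` U \<subseteq> C \<and> nbhd_in (top_of_set C) (f ` U) (f x) \<and>
             open_map (top_of_set U) (top_of_set C) f \<and>
             (\<forall>U'. U' \<subseteq> U \<and> nbhd_in euclidean U' x \<longrightarrow>
                 nbhd_in (top_of_set C) (f ` U') (f x)))))"

definition locally_convex_set :: "'v::{real_vector,topological_space} set \<Rightarrow> bool" where
  "locally_convex_set Y \<longleftrightarrow> (\<forall>y\<in>Y. \<exists>N. nbhd_in euclidean N y \<and> convex (N \<inter> Y))"

end

(* Near x, f maps a chart N x openly onto a neighbourhood of f x in a convex cone
   C x with vertex f x.  Two charts at points of one fibre carry cones that agree
   near the common image point, so by connectedness of the fibre all of them agree
   with C x.  Since f is closed, the points of f(X) near f x are images of points
   near the fibre and hence lie in C x; openness of the chart gives the converse.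
   So f(X) coincides with C x near f x, which yields openness onto the image and
   local convexity.

   Convexity of a closed connected set S that coincides near each of its points y
   with a convex cone C y is a Tietze-Nakajima argument: for fixed a, the set of
   z in S with [a, z] contained in S is closed in S, and it is open because the
   tangent cones {w. y + w \<in> C y} are constant along the open segment from a to z
   and contain the tangent cone at z; a tube-lemma argument over the segment
   parameter then lets the endpoint z move within S. *)

theory Submission
  imports Defs
begin

section \<open>Segments and cones in topological vector spaces\<close>

lemma continuous_on_tvs_add:
  fixes g h :: "'a::topological_space \<Rightarrow> 'v::{real_vector,t2_space}"
  assumes "locally_convex_tvs TYPE('v)" "continuous_on S g" "continuous_on S h"
  shows "continuous_on S (\<lambda>x. g x + h x)"
  using assms continuous_on_compose2[of UNIV "\<lambda>p::'v \<times> 'v. fst p + snd p"]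
  by (force simp: locally_convex_tvs_def intro: continuous_on_Pair)

lemma continuous_on_tvs_scaleR:
  fixes g :: "'a::topological_space \<Rightarrow> real" and h :: "'a \<Rightarrow> 'v::{real_vector,t2_space}"
  assumes "locally_convex_tvs TYPE('v)" "continuous_on S g" "continuous_on S h"
  shows "continuous_on S (\<lambda>x. g x *\<^sub>R h x)"
  using assms continuous_on_compose2[of UNIV "\<lambda>p::real \<times> 'v. fst p *\<^sub>R snd p"]
  by (force simp: locally_convex_tvs_def intro: continuous_on_Pair)

lemma locally_convex_tvs_convex_nhd:
  fixes x :: "'v::{real_vector,t2_space}"
  assumes "locally_convex_tvs TYPE('v)" "open U" "x \<in> U"
  obtains W where "open W" "convex W" "x \<in> W" "W \<subseteq> U"
  using assms unfolding locally_convex_tvs_def by blast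

lemma eventually_nhds_along_ray:
  fixes p w :: "'v::{real_vector,t2_space}"
  assumes "locally_convex_tvs TYPE('v)" "\<forall>\<^sub>F v in nhds p. P v"
  shows "\<forall>\<^sub>F t in at_right 0. P (p + t *\<^sub>R w)"
proof -
  have "continuous_on UNIV (\<lambda>t::real. p + t *\<^sub>R w)"
    by (intro continuous_on_tvs_add[OF assms(1)] continuous_on_tvs_scaleR[OF assms(1)]
        continuous_intros)
  then have "((\<lambda>t. p + t *\<^sub>R w) \<longlongrightarrow> p + 0 *\<^sub>R w) (at 0 within UNIV)"
    unfolding continuous_on_def by blast
  then have "((\<lambda>t. p + t *\<^sub>R w) \<longlongrightarrow> p) (at_right 0)"
    by (auto intro: tendsto_within_subset)
  then show ?thesis
    using assms(2) eventually_compose_filterlim by blast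
qed

lemma closed_segment_point:
  assumes "0 \<le> u" "u \<le> 1"
  shows "(1 - u) *\<^sub>R a + u *\<^sub>R b \<in> closed_segment a b"
  unfolding closed_segment_def using assms by blast

lemma closed_segment_subset_by_parts:
  fixes a z :: "'a::real_vector"
  assumes "0 < \<mu>" and head: "closed_segment a ((1 - \<mu>) *\<^sub>R a + \<mu> *\<^sub>R z) \<subseteq> S"
    and tail: "\<forall>l\<in>{\<mu>..1}. (1 - l) *\<^sub>R a + l *\<^sub>R z \<in> S"
  shows "closed_segment a z \<subseteq> S"
proof
  fix v assume "v \<in> closed_segment a z"
  then obtain l where l: "0 \<le> l" "l \<le> 1" "v = (1 - l) *\<^sub>R a + l *\<^sub>R z"
    by (auto simp: in_segment)
  show "v \<in> S"
  proof (cases "\<mu> \<le> l")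
    case True
    with tail l show ?thesis
      by auto
  next
    case False
    let ?q = "(1 - \<mu>) *\<^sub>R a + \<mu> *\<^sub>R z"
    have "v = (1 - l / \<mu>) *\<^sub>R a + (l / \<mu>) *\<^sub>R ?q"
      using l(3) \<open>0 < \<mu>\<close> by (simp add: algebra_simps)
    moreover have "(1 - l / \<mu>) *\<^sub>R a + (l / \<mu>) *\<^sub>R ?q \<in> closed_segment a ?q"
      using False l \<open>0 < \<mu>\<close> by (intro closed_segment_point) auto
    ultimately show ?thesis
      using head by auto
  qed
qed

lemma closed_segment_subset_closed:
  fixes a :: "'v::{real_vector,t2_space}"
  assumes "locally_convex_tvs TYPE('v)" "closed S"
  shows "closed {z. closed_segment a z \<subseteq> S}"
proof -
  have eq: "{z. closed_segment a z \<subseteq> S} = (\<Inter>u\<in>{0..1}. (\<lambda>z. (1 - u) *\<^sub>R a + u *\<^sub>R z) -` S)"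
    unfolding closed_segment_def by fastforce
  show ?thesis
    unfolding eq
    by (intro closed_INT ballI closed_vimage assms(2) continuous_on_tvs_add[OF assms(1)]
        continuous_on_tvs_scaleR[OF assms(1)] continuous_intros)
qed

lemma convex_cone_with_vertex_translate:
  assumes "convex_cone_with_vertex C y"
  shows "convex_cone {w. y + w \<in> C}"
proof -
  have "y \<in> C" "convex C"
    using assms by (auto simp: convex_cone_with_vertex_def cone_with_vertex_def)
  have scale: "y + c *\<^sub>R w \<in> C" if "y + w \<in> C" "0 \<le> c" for w c
  proof (cases "w = 0")
    case True
    with \<open>y \<in> C\<close> show ?thesis by simp
  next
    case False
    then have "(1 - c) *\<^sub>R y + c *\<^sub>R (y + w) \<in> C"
      using assms that unfolding convex_cone_with_vertex_def cone_with_vertex_def by auto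
    then show ?thesis
      by (simp add: algebra_simps)
  qed
  have "y + (v + w) \<in> C" if "y + v \<in> C" "y + w \<in> C" for v w
  proof -
    have "(1/2) *\<^sub>R (y + v) + (1/2) *\<^sub>R (y + w) \<in> C"
      using \<open>convex C\<close> that by (rule convexD) auto
    then have "y + (1/2::real) *\<^sub>R (v + w) \<in> C"
      by (simp add: algebra_simps flip: scaleR_add_left)
    from scale[OF this, of 2] show ?thesis
      by simp
  qed
  with \<open>y \<in> C\<close> scale show ?thesis
    by (auto simp: convex_cone_iff)
qed

section \<open>Closed connected sets that are locally convex cones\<close>

locale locally_conic =
  fixes S :: "'v::{real_vector,t2_space} set" and C :: "'v \<Rightarrow> 'v set"
  assumes tvs: "locally_convex_tvs TYPE('v)"
    and cone: "y \<in> S \<Longrightarrow> convex_cone_with_vertex (C y) y"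
    and eventually_eq_cone: "y \<in> S \<Longrightarrow> \<forall>\<^sub>F v in nhds y. v \<in> S \<longleftrightarrow> v \<in> C y"
begin

(* By tangent_cone_iff this depends only on S, not on the choice of the cones C y. *)
definition tangent_cone :: "'v \<Rightarrow> 'v set" where
  "tangent_cone y = {w. y + w \<in> C y}"

lemma convex_cone_tangent_cone: "y \<in> S \<Longrightarrow> convex_cone (tangent_cone y)"
  unfolding tangent_cone_def by (rule convex_cone_with_vertex_translate[OF cone])

lemma tangent_cone_unscale:
  assumes "y \<in> S" "t *\<^sub>R w \<in> tangent_cone y" "0 < t"
  shows "w \<in> tangent_cone y"
proof -
  have "(1/t) *\<^sub>R (t *\<^sub>R w) \<in> tangent_cone y"
    by (rule convex_cone_scaleR[OF convex_cone_tangent_cone[OF assms(1)]]) (use assms in auto)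
  with assms(3) show ?thesis
    by simp
qed

lemma tangent_cone_iff:
  assumes "y \<in> S"
  shows "w \<in> tangent_cone y \<longleftrightarrow> (\<forall>\<^sub>F t in at_right 0. y + t *\<^sub>R w \<in> S)"
proof -
  have ray: "\<forall>\<^sub>F t in at_right 0. y + t *\<^sub>R w \<in> S \<longleftrightarrow> t *\<^sub>R w \<in> tangent_cone y"
    using eventually_nhds_along_ray[OF tvs eventually_eq_cone[OF assms]]
    by (simp add: tangent_cone_def)
  have pos: "\<forall>\<^sub>F t in at_right 0. (0::real) < t"
    by (rule eventually_at_right_less)
  show ?thesis
  proof
    assume "w \<in> tangent_cone y"
    then have scaled: "t *\<^sub>R w \<in> tangent_cone y" if "0 < t" for t
      using convex_cone_scaleR[OF convex_cone_tangent_cone[OF assms]] that by simp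
    from ray pos show "\<forall>\<^sub>F t in at_right 0. y + t *\<^sub>R w \<in> S"
      by eventually_elim (use scaled in auto)
  next
    assume "\<forall>\<^sub>F t in at_right 0. y + t *\<^sub>R w \<in> S"
    with ray pos have "\<forall>\<^sub>F t in at_right 0. 0 < t \<and> t *\<^sub>R w \<in> tangent_cone y"
      by eventually_elim auto
    then obtain t where "0 < t" "t *\<^sub>R w \<in> tangent_cone y"
      using eventually_happens'[OF trivial_limit_at_right_real] by blast
    then show "w \<in> tangent_cone y"
      using tangent_cone_unscale[OF assms] by blast
  qed
qed

lemma tangent_cone_subset_near:
  assumes "y \<in> S" "y' \<in> S" and near: "\<forall>\<^sub>F v in nhds y'. v \<in> S \<longleftrightarrow> v \<in> C y"
  shows "tangent_cone y \<subseteq> tangent_cone y'"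
proof
  fix w assume w: "w \<in> tangent_cone y"
  have "y' - y \<in> tangent_cone y"
    using eventually_nhds_x_imp_x[OF near] assms(2) by (simp add: tangent_cone_def)
  then have "(y' - y) + t *\<^sub>R w \<in> tangent_cone y" if "0 \<le> t" for t
    using convex_cone_tangent_cone[OF assms(1)] w that
    by (simp add: convex_cone_add convex_cone_scaleR)
  then have ray_in_cone: "y' + t *\<^sub>R w \<in> C y" if "0 \<le> t" for t
    using that by (simp add: tangent_cone_def)
  from eventually_nhds_along_ray[OF tvs near, of w] eventually_at_right_less[of "0::real"]
  have "\<forall>\<^sub>F t in at_right 0. y' + t *\<^sub>R w \<in> S"
    by eventually_elim (use ray_in_cone in auto)
  then show "w \<in> tangent_cone y'"
    using tangent_cone_iff[OF assms(2)] by blast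
qed

lemma tangent_cone_supset_near:
  assumes "y \<in> S" "y' \<in> S" and near: "\<forall>\<^sub>F v in nhds y'. v \<in> S \<longleftrightarrow> v \<in> C y"
    and towards_y: "y - y' \<in> tangent_cone y"
  shows "tangent_cone y' \<subseteq> tangent_cone y"
proof
  fix w assume "w \<in> tangent_cone y'"
  with tangent_cone_iff[OF assms(2)] have "\<forall>\<^sub>F t in at_right 0. y' + t *\<^sub>R w \<in> S"
    by blast
  with eventually_nhds_along_ray[OF tvs near, of w] eventually_at_right_less[of "0::real"]
  have "\<forall>\<^sub>F t in at_right 0. 0 < t \<and> y' + t *\<^sub>R w \<in> C y"
    by eventually_elim auto
  then obtain t where t: "0 < t" "(y' - y) + t *\<^sub>R w \<in> tangent_cone y"
    using eventually_happens'[OF trivial_limit_at_right_real] by (force simp: tangent_cone_def)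
  then have "(y - y') + ((y' - y) + t *\<^sub>R w) \<in> tangent_cone y"
    using convex_cone_add[OF convex_cone_tangent_cone[OF assms(1)] towards_y] by blast
  then show "w \<in> tangent_cone y"
    using tangent_cone_unscale[OF assms(1) _ t(1)] by simp
qed

lemma segment_direction_in_tangent_cone:
  assumes "closed_segment y b \<subseteq> S"
  shows "b - y \<in> tangent_cone y"
proof -
  have "y \<in> S"
    using assms by auto
  have "y + t *\<^sub>R (b - y) \<in> S" if "t \<in> {0<..<1}" for t
  proof -
    have "y + t *\<^sub>R (b - y) = (1 - t) *\<^sub>R y + t *\<^sub>R b"
      by (simp add: algebra_simps)
    with that have "y + t *\<^sub>R (b - y) \<in> closed_segment y b"
      using closed_segment_point[of t y b] by simp
    with assms show ?thesis
      by blast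
  qed
  then have "\<forall>\<^sub>F t in at_right 0. y + t *\<^sub>R (b - y) \<in> S"
    using eventually_at_right_real[of 0 1] by (auto elim: eventually_mono)
  with tangent_cone_iff[OF \<open>y \<in> S\<close>] show ?thesis
    by blast
qed

lemma line_in_tangent_cone:
  assumes seg: "closed_segment a z \<subseteq> S" and l: "0 < l" "l < 1"
  shows "c *\<^sub>R (z - a) \<in> tangent_cone ((1 - l) *\<^sub>R a + l *\<^sub>R z)"
proof -
  define x where "x = (1 - l) *\<^sub>R a + l *\<^sub>R z"
  have "x \<in> closed_segment a z"
    unfolding x_def using l by (intro closed_segment_point) auto
  then have "closed_segment x z \<subseteq> closed_segment a z" "closed_segment x a \<subseteq> closed_segment a z"
    by (rule closed_segment_subset; simp)+
  with seg have "closed_segment x z \<subseteq> S" "closed_segment x a \<subseteq> S"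
    by blast+
  then have "z - x \<in> tangent_cone x" "a - x \<in> tangent_cone x"
    by (blast intro: segment_direction_in_tangent_cone)+
  moreover have "z - x = (1 - l) *\<^sub>R (z - a)" "a - x = (- l) *\<^sub>R (z - a)"
    unfolding x_def by (simp_all add: algebra_simps)
  ultimately have forward: "(1 - l) *\<^sub>R (z - a) \<in> tangent_cone x"
    and backward: "(- l) *\<^sub>R (z - a) \<in> tangent_cone x"
    by simp_all
  have cc: "convex_cone (tangent_cone x)"
    using seg \<open>x \<in> closed_segment a z\<close> by (blast intro: convex_cone_tangent_cone)
  show ?thesis
  proof (cases "0 \<le> c")
    case True
    with convex_cone_scaleR[OF cc _ forward, of "c / (1 - l)"] l show ?thesis
      by (simp add: x_def)
  next
    case False
    with convex_cone_scaleR[OF cc _ backward, of "- c / l"] l show ?thesis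
      by (simp add: x_def divide_le_0_iff)
  qed
qed

lemma tangent_cone_eq_on_open_segment:
  assumes seg: "closed_segment a z \<subseteq> S" and "l \<in> {0<..<1}" "l' \<in> {0<..<1}"
  shows "tangent_cone ((1 - l) *\<^sub>R a + l *\<^sub>R z) = tangent_cone ((1 - l') *\<^sub>R a + l' *\<^sub>R z)"
proof -
  let ?x = "\<lambda>l. (1 - l) *\<^sub>R a + l *\<^sub>R z"
  have in_S: "?x l \<in> S" if "l \<in> {0<..<1}" for l
    using that seg closed_segment_point[of l a z] by auto
  have "continuous_on UNIV ?x"
    by (intro continuous_on_tvs_add[OF tvs] continuous_on_tvs_scaleR[OF tvs] continuous_intros)
  show ?thesis
  proof (rule connected_equivalence_relation[where R = "\<lambda>l l'. tangent_cone (?x l) = tangent_cone (?x l')"])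
    fix l0 :: real assume l0: "l0 \<in> {0<..<1}"
    have "\<forall>\<^sub>F y in nhds (?x l0). \<forall>\<^sub>F v in nhds y. v \<in> S \<longleftrightarrow> v \<in> C (?x l0)"
      unfolding eventually_eventually by (rule eventually_eq_cone[OF in_S[OF l0]])
    then obtain U where U: "open U" "?x l0 \<in> U" "\<forall>y\<in>U. \<forall>\<^sub>F v in nhds y. v \<in> S \<longleftrightarrow> v \<in> C (?x l0)"
      unfolding eventually_nhds[of _ "?x l0"] by blast
    have "open (?x -` U)"
      using U(1) \<open>continuous_on UNIV ?x\<close> by (rule open_vimage)
    show "\<exists>T. openin (top_of_set {0<..<1}) T \<and> l0 \<in> T \<and>
            (\<forall>l\<in>T. tangent_cone (?x l0) = tangent_cone (?x l))"
    proof (intro exI conjI ballI)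
      show "openin (top_of_set {0<..<1}) ({0<..<1} \<inter> ?x -` U)"
        using \<open>open (?x -` U)\<close> by (rule openin_open_Int)
      show "l0 \<in> {0<..<1} \<inter> ?x -` U"
        using l0 U(2) by simp
      fix l assume l: "l \<in> {0<..<1} \<inter> ?x -` U"
      then have "?x l \<in> S" and near: "\<forall>\<^sub>F v in nhds (?x l). v \<in> S \<longleftrightarrow> v \<in> C (?x l0)"
        using in_S U(3) by auto
      have "?x l0 - ?x l = (l0 - l) *\<^sub>R (z - a)"
        by (simp add: algebra_simps)
      then have "?x l0 - ?x l \<in> tangent_cone (?x l0)"
        using line_in_tangent_cone[OF seg, of l0] l0 by simp
      then have "tangent_cone (?x l) \<subseteq> tangent_cone (?x l0)"
        by (rule tangent_cone_supset_near[OF in_S[OF l0] \<open>?x l \<in> S\<close> near])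
      with tangent_cone_subset_near[OF in_S[OF l0] \<open>?x l \<in> S\<close> near]
      show "tangent_cone (?x l0) = tangent_cone (?x l)"
        by (rule subset_antisym)
    qed
  qed (use assms in auto)
qed

lemma tangent_cone_endpoint_subset:
  assumes seg: "closed_segment a z \<subseteq> S" and l: "0 < l" "l \<le> 1"
  shows "tangent_cone z \<subseteq> tangent_cone ((1 - l) *\<^sub>R a + l *\<^sub>R z)"
proof (cases "l = 1")
  case True
  then show ?thesis
    by simp
next
  case False
  have "z \<in> S"
    using seg by auto
  have "\<forall>\<^sub>F y in nhds z. \<forall>\<^sub>F v in nhds y. v \<in> S \<longleftrightarrow> v \<in> C z"
    unfolding eventually_eventually by (rule eventually_eq_cone[OF \<open>z \<in> S\<close>])
  from eventually_nhds_along_ray[OF tvs this, of "a - z"]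
  have "\<forall>\<^sub>F t in at_right 0. t \<in> {0<..<1} \<and>
      (\<forall>\<^sub>F v in nhds (z + t *\<^sub>R (a - z)). v \<in> S \<longleftrightarrow> v \<in> C z)"
    by (rule eventually_conj[OF eventually_at_right_real[OF zero_less_one]])
  then obtain t where t: "t \<in> {0<..<1}"
    and near: "\<forall>\<^sub>F v in nhds (z + t *\<^sub>R (a - z)). v \<in> S \<longleftrightarrow> v \<in> C z"
    using eventually_happens'[OF trivial_limit_at_right_real] by blast
  have point: "z + t *\<^sub>R (a - z) = (1 - (1 - t)) *\<^sub>R a + (1 - t) *\<^sub>R z"
    by (simp add: algebra_simps)
  with t seg closed_segment_point[of "1 - t" a z] have "z + t *\<^sub>R (a - z) \<in> S"
    by auto
  then have "tangent_cone z \<subseteq> tangent_cone (z + t *\<^sub>R (a - z))"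
    using tangent_cone_subset_near[OF \<open>z \<in> S\<close> _ near] by blast
  also have "\<dots> = tangent_cone ((1 - l) *\<^sub>R a + l *\<^sub>R z)"
    unfolding point using t l False by (intro tangent_cone_eq_on_open_segment[OF seg]) auto
  finally show ?thesis .
qed

lemma eventually_closed_segment_from_vertex:
  assumes "y \<in> S"
  shows "\<forall>\<^sub>F v in nhds y. v \<in> S \<longrightarrow> closed_segment y v \<subseteq> S"
proof -
  obtain U where U: "open U" "y \<in> U" "\<forall>v\<in>U. v \<in> S \<longleftrightarrow> v \<in> C y"
    using eventually_eq_cone[OF assms] unfolding eventually_nhds by blast
  obtain W where W: "open W" "convex W" "y \<in> W" "W \<subseteq> U"
    using locally_convex_tvs_convex_nhd[OF tvs U(1,2)] .
  have "convex (C y)" "y \<in> C y"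
    using cone[OF assms] by (auto simp: convex_cone_with_vertex_def cone_with_vertex_def)
  have "closed_segment y v \<subseteq> S" if "v \<in> W" "v \<in> S" for v
  proof -
    have "v \<in> C y"
      using U(3) W(4) that by blast
    then have "closed_segment y v \<subseteq> C y \<inter> W"
      using \<open>convex (C y)\<close> \<open>y \<in> C y\<close> W(2,3) that(1)
      by (intro closed_segment_subset convex_Int) auto
    with U(3) W(4) show ?thesis
      by blast
  qed
  with W(1,3) show ?thesis
    unfolding eventually_nhds by blast
qed

lemma segment_point_in_cone:
  assumes seg: "closed_segment a z \<subseteq> S" and l0: "0 < l0" "l0 \<le> 1" and l: "0 \<le> l" "l \<le> 1"
    and "z' \<in> C z"
  shows "(1 - l) *\<^sub>R a + l *\<^sub>R z' \<in> C ((1 - l0) *\<^sub>R a + l0 *\<^sub>R z)"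
proof -
  let ?x = "\<lambda>l. (1 - l) *\<^sub>R a + l *\<^sub>R z"
  have "?x l0 \<in> closed_segment a z"
    using l0 by (intro closed_segment_point) auto
  moreover have "?x l \<in> closed_segment a z"
    using l by (intro closed_segment_point) auto
  ultimately have "closed_segment (?x l0) (?x l) \<subseteq> closed_segment a z"
    by (rule closed_segment_subset[OF _ _ convex_closed_segment])
  with seg \<open>?x l0 \<in> closed_segment a z\<close>
  have "?x l0 \<in> S" "closed_segment (?x l0) (?x l) \<subseteq> S"
    by auto
  have cc: "convex_cone (tangent_cone (?x l0))"
    using \<open>?x l0 \<in> S\<close> by (rule convex_cone_tangent_cone)
  have "z' - z \<in> tangent_cone z"
    using \<open>z' \<in> C z\<close> by (simp add: tangent_cone_def)
  also have "\<dots> \<subseteq> tangent_cone (?x l0)"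
    using l0 by (rule tangent_cone_endpoint_subset[OF seg])
  finally have "l *\<^sub>R (z' - z) \<in> tangent_cone (?x l0)"
    using convex_cone_scaleR[OF cc] l by simp
  moreover have "?x l - ?x l0 \<in> tangent_cone (?x l0)"
    by (rule segment_direction_in_tangent_cone) fact
  ultimately have "l *\<^sub>R (z' - z) + (?x l - ?x l0) \<in> tangent_cone (?x l0)"
    by (rule convex_cone_add[OF cc])
  then show ?thesis
    by (simp add: tangent_cone_def algebra_simps)
qed

(* Compactness enters here: the regions where S agrees with the cones at the points
   of the segment cover it, and the tube lemma turns this cover into one that is
   uniform in the endpoint z'. *)
lemma eventually_segment_tail_subset:
  assumes seg: "closed_segment a z \<subseteq> S" and "0 < \<mu>"
  shows "\<forall>\<^sub>F z' in nhds z. z' \<in> S \<longrightarrow> (\<forall>l\<in>{\<mu>..1}. (1 - l) *\<^sub>R a + l *\<^sub>R z' \<in> S)"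
proof -
  define x where "x l = (1 - l) *\<^sub>R a + l *\<^sub>R z" for l :: real
  have "x l \<in> S" if "l \<in> {\<mu>..1}" for l
    using that \<open>0 < \<mu>\<close> seg closed_segment_point[of l a z] by (auto simp: x_def)
  then have "\<forall>l\<in>{\<mu>..1}. \<forall>\<^sub>F v in nhds (x l). v \<in> S \<longleftrightarrow> v \<in> C (x l)"
    using eventually_eq_cone by blast
  then have "\<forall>l\<in>{\<mu>..1}. \<exists>U. open U \<and> x l \<in> U \<and> (\<forall>v\<in>U. v \<in> S \<longleftrightarrow> v \<in> C (x l))"
    unfolding eventually_nhds .
  from bchoice[OF this] obtain U where U: "\<forall>l\<in>{\<mu>..1}.
      open (U l) \<and> x l \<in> U l \<and> (\<forall>v\<in>U l. v \<in> S \<longleftrightarrow> v \<in> C (x l))"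
    by blast
  define W where "W = (\<lambda>(v, l). (1 - l) *\<^sub>R a + l *\<^sub>R v) -` (\<Union>l\<in>{\<mu>..1}. U l)"
  have "continuous_on UNIV (\<lambda>(v, l). (1 - l) *\<^sub>R a + l *\<^sub>R (v::'v))"
    unfolding case_prod_beta
    by (intro continuous_on_tvs_add[OF tvs] continuous_on_tvs_scaleR[OF tvs] continuous_intros)
  then have W_open: "open W"
    unfolding W_def by (rule open_vimage[rotated]) (use U in auto)
  have z_slice: "{z} \<times> {\<mu>..1} \<subseteq> W"
  proof (intro subsetI)
    fix p assume "p \<in> {z} \<times> {\<mu>..1}"
    then obtain l where "p = (z, l)" "l \<in> {\<mu>..1}"
      by blast
    with U have "x l \<in> (\<Union>l\<in>{\<mu>..1}. U l)"
      by blast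
    with \<open>p = (z, l)\<close> show "p \<in> W"
      by (simp add: W_def x_def)
  qed
  obtain Z where Z: "z \<in> Z" "open Z" "Z \<times> {\<mu>..1} \<subseteq> W"
    using Elementary_Topology.tube_lemma[OF compact_Icc W_open z_slice] by blast
  have "z \<in> S"
    using seg by auto
  from eventually_nhds_in_open[OF Z(2,1)] eventually_eq_cone[OF \<open>z \<in> S\<close>]
  show ?thesis
  proof eventually_elim
    case (elim z')
    show ?case
    proof (intro impI ballI)
      fix l assume "z' \<in> S" and l: "l \<in> {\<mu>..1}"
      with elim Z(3) have "(z', l) \<in> W"
        by blast
      then obtain l0 where l0: "l0 \<in> {\<mu>..1}" "(1 - l) *\<^sub>R a + l *\<^sub>R z' \<in> U l0"
        by (auto simp: W_def)
      have "(1 - l) *\<^sub>R a + l *\<^sub>R z' \<in> C (x l0)"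
        unfolding x_def using l l0 \<open>0 < \<mu>\<close> elim \<open>z' \<in> S\<close>
        by (intro segment_point_in_cone[OF seg]) auto
      with U l0 show "(1 - l) *\<^sub>R a + l *\<^sub>R z' \<in> S"
        by blast
    qed
  qed
qed

lemma eventually_closed_segment_subset:
  assumes seg: "closed_segment a z \<subseteq> S"
  shows "\<forall>\<^sub>F z' in nhds z. z' \<in> S \<longrightarrow> closed_segment a z' \<subseteq> S"
proof -
  have "a \<in> S"
    using seg by auto
  then obtain G where G: "open G" "a \<in> G" "\<And>v. v \<in> G \<Longrightarrow> v \<in> S \<Longrightarrow> closed_segment a v \<subseteq> S"
    using eventually_closed_segment_from_vertex[OF \<open>a \<in> S\<close>] unfolding eventually_nhds by blast
  have "\<forall>\<^sub>F t in at_right 0. t \<in> {0<..<1} \<and> a + t *\<^sub>R (z - a) \<in> G"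
    using eventually_conj[OF eventually_at_right_real[of 0 1]
        eventually_nhds_along_ray[OF tvs eventually_nhds_in_open[OF G(1,2)]]] by simp
  then obtain \<mu> where \<mu>: "0 < \<mu>" "\<mu> < 1" "a + \<mu> *\<^sub>R (z - a) \<in> G"
    using eventually_happens'[OF trivial_limit_at_right_real] by auto
  then have "(1 - \<mu>) *\<^sub>R a + \<mu> *\<^sub>R z \<in> G"
    by (simp add: algebra_simps)
  have "continuous_on UNIV (\<lambda>z'. (1 - \<mu>) *\<^sub>R a + \<mu> *\<^sub>R z')"
    by (intro continuous_on_tvs_add[OF tvs] continuous_on_tvs_scaleR[OF tvs] continuous_intros)
  then have "open ((\<lambda>z'. (1 - \<mu>) *\<^sub>R a + \<mu> *\<^sub>R z') -` G)"
    using G(1) by (rule open_vimage[rotated])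
  with \<open>(1 - \<mu>) *\<^sub>R a + \<mu> *\<^sub>R z \<in> G\<close>
  have "\<forall>\<^sub>F z' in nhds z. (1 - \<mu>) *\<^sub>R a + \<mu> *\<^sub>R z' \<in> G"
    using eventually_nhds_in_open by fastforce
  from this eventually_segment_tail_subset[OF seg \<mu>(1)]
  show ?thesis
  proof eventually_elim
    case (elim z')
    show ?case
    proof
      assume "z' \<in> S"
      with elim \<mu> have "(1 - \<mu>) *\<^sub>R a + \<mu> *\<^sub>R z' \<in> S"
        by auto
      with G(3) elim(1) have "closed_segment a ((1 - \<mu>) *\<^sub>R a + \<mu> *\<^sub>R z') \<subseteq> S"
        by blast
      with closed_segment_subset_by_parts[OF \<mu>(1)] elim(2) \<open>z' \<in> S\<close>
      show "closed_segment a z' \<subseteq> S"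
        by blast
    qed
  qed
qed

theorem convex_if_closed_connected:
  assumes "closed S" "connected S"
  shows "convex S"
  unfolding convex_contains_segment
proof (intro ballI)
  fix a b assume "a \<in> S" "b \<in> S"
  define A where "A = S \<inter> {z. closed_segment a z \<subseteq> S}"
  have "openin (top_of_set S) A"
    unfolding openin_subopen[of _ A]
  proof
    fix z assume "z \<in> A"
    then obtain U where "open U" "z \<in> U" "\<forall>z'\<in>U. z' \<in> S \<longrightarrow> closed_segment a z' \<subseteq> S"
      using eventually_closed_segment_subset[of a z] unfolding A_def eventually_nhds by blast
    with \<open>z \<in> A\<close> show "\<exists>T. openin (top_of_set S) T \<and> z \<in> T \<and> T \<subseteq> A"
      by (intro exI[of _ "S \<inter> U"]) (auto simp: A_def openin_open_Int)
  qed
  moreover have "closedin (top_of_set S) A"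
    unfolding A_def by (intro closedin_closed_Int closed_segment_subset_closed tvs assms(1))
  moreover have "a \<in> A"
    using \<open>a \<in> S\<close> by (simp add: A_def)
  ultimately have "A = S"
    using assms(2) unfolding connected_clopen by blast
  with \<open>b \<in> S\<close> show "closed_segment a b \<subseteq> S"
    by (auto simp: A_def)
qed

lemma locally_convex: "locally_convex_set S"
  unfolding locally_convex_set_def
proof
  fix y assume "y \<in> S"
  then obtain U where U: "open U" "y \<in> U" "\<forall>v\<in>U. v \<in> S \<longleftrightarrow> v \<in> C y"
    using eventually_eq_cone unfolding eventually_nhds by blast
  obtain W where W: "open W" "convex W" "y \<in> W" "W \<subseteq> U"
    using locally_convex_tvs_convex_nhd[OF tvs U(1,2)] .
  have "W \<inter> S = W \<inter> C y"
    using U(3) W(4) by blast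
  then have "convex (W \<inter> S)"
    using W(2) cone[OF \<open>y \<in> S\<close>] by (simp add: convex_Int convex_cone_with_vertex_def)
  moreover have "nbhd_in euclidean W y"
    using W unfolding nbhd_in_def by auto
  ultimately show "\<exists>N. nbhd_in euclidean N y \<and> convex (N \<inter> S)"
    by blast
qed

end


section \<open>Maps with local convexity data\<close>

locale cone_charts =
  fixes f :: "'x::topological_space \<Rightarrow> 'v::{real_vector,topological_space}"
    and N :: "'x \<Rightarrow> 'x set" and C :: "'x \<Rightarrow> 'v set"
  assumes open_chart: "open (N x)" and in_chart: "x \<in> N x"
    and chart_cone: "convex_cone_with_vertex (C x) (f x)"
    and image_chart_subset: "f ` N x \<subseteq> C x"
    and open_map_chart: "open_map (top_of_set (N x)) (top_of_set (C x)) f"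
    and image_nhd: "U \<subseteq> N x \<Longrightarrow> nbhd_in euclidean U x \<Longrightarrow> nbhd_in (top_of_set (C x)) (f ` U) (f x)"

lemma local_convexity_data_imp_cone_charts:
  assumes "local_convexity_data f"
  shows "\<exists>N C. cone_charts f N C"
proof -
  have "\<exists>N C. open N \<and> x \<in> N \<and> convex_cone_with_vertex C (f x) \<and> f ` N \<subseteq> C \<and>
      open_map (top_of_set N) (top_of_set C) f \<and>
      (\<forall>U. U \<subseteq> N \<and> nbhd_in euclidean U x \<longrightarrow> nbhd_in (top_of_set C) (f ` U) (f x))" for x
  proof -
    obtain N where "open N" "x \<in> N" and charts: "\<forall>U. open U \<and> x \<in> U \<and> U \<subseteq> N \<longrightarrow>
        (\<exists>C. convex_cone_with_vertex C (f x) \<and> f ` U \<subseteq> C \<and> nbhd_in (top_of_set C) (f ` U) (f x) \<and>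
          open_map (top_of_set U) (top_of_set C) f \<and>
          (\<forall>U'. U' \<subseteq> U \<and> nbhd_in euclidean U' x \<longrightarrow> nbhd_in (top_of_set C) (f ` U') (f x)))"
      using assms unfolding local_convexity_data_def by blast
    with charts[rule_format, of N] show ?thesis
      by blast
  qed
  then obtain N C where "\<And>x. open (N x) \<and> x \<in> N x \<and> convex_cone_with_vertex (C x) (f x) \<and>
      f ` N x \<subseteq> C x \<and> open_map (top_of_set (N x)) (top_of_set (C x)) f \<and>
      (\<forall>U. U \<subseteq> N x \<and> nbhd_in euclidean U x \<longrightarrow> nbhd_in (top_of_set (C x)) (f ` U) (f x))"
    by metis
  then have "cone_charts f N C"
    by unfold_locales blast+
  then show ?thesis
    by blast
qed

context cone_charts
begin

lemma eventually_chart_cones_eq: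
  assumes "f x' = f x" "x' \<in> N x"
  shows "\<forall>\<^sub>F v in nhds (f x). v \<in> C x \<longleftrightarrow> v \<in> C x'"
proof -
  define A where "A = f ` (N x \<inter> N x')"
  have "openin (top_of_set (N x)) (N x \<inter> N x')"
    using open_chart by (rule openin_open_Int)
  then have "openin (top_of_set (C x)) A"
    using open_map_chart unfolding A_def open_map_def by blast
  then obtain U1 where U1: "open U1" "A = C x \<inter> U1"
    unfolding openin_open by blast
  have "nbhd_in euclidean (N x \<inter> N x') x'"
    unfolding nbhd_in_def using open_chart in_chart assms(2)
    by (intro exI[of _ "N x \<inter> N x'"]) (simp add: open_openin[symmetric] open_Int)
  then have "nbhd_in (top_of_set (C x')) A (f x')"
    unfolding A_def by (intro image_nhd) auto
  then obtain U2 where U2: "open U2" "f x' \<in> U2" "C x' \<inter> U2 \<subseteq> A"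
    unfolding nbhd_in_def openin_open by blast
  have "A \<subseteq> C x" "A \<subseteq> C x'"
    using image_chart_subset unfolding A_def by blast+
  have "f x \<in> A"
    unfolding A_def using assms in_chart by (metis IntI image_eqI)
  have "\<forall>v\<in>U1 \<inter> U2. v \<in> C x \<longleftrightarrow> v \<in> C x'"
    using U1(2) U2(3) \<open>A \<subseteq> C x\<close> \<open>A \<subseteq> C x'\<close> by blast
  moreover have "open (U1 \<inter> U2)" "f x \<in> U1 \<inter> U2"
    using U1 U2 \<open>f x \<in> A\<close> assms(1) by auto
  ultimately show ?thesis
    unfolding eventually_nhds by blast
qed

lemma eventually_chart_cones_eq_on_fibre:
  assumes "connected (f -` {f x})" "f x' = f x"
  shows "\<forall>\<^sub>F v in nhds (f x). v \<in> C x \<longleftrightarrow> v \<in> C x'"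
proof (rule connected_equivalence_relation[OF assms(1),
      where R = "\<lambda>u u'. \<forall>\<^sub>F v in nhds (f x). v \<in> C u \<longleftrightarrow> v \<in> C u'"])
  show "x \<in> f -` {f x}" "x' \<in> f -` {f x}"
    using assms(2) by auto
  show "\<forall>\<^sub>F v in nhds (f x). v \<in> C b \<longleftrightarrow> v \<in> C a"
    if "\<forall>\<^sub>F v in nhds (f x). v \<in> C a \<longleftrightarrow> v \<in> C b" for a b
    using that by eventually_elim blast
  show "\<forall>\<^sub>F v in nhds (f x). v \<in> C a \<longleftrightarrow> v \<in> C c"
    if "\<forall>\<^sub>F v in nhds (f x). v \<in> C a \<longleftrightarrow> v \<in> C b" "\<forall>\<^sub>F v in nhds (f x). v \<in> C b \<longleftrightarrow> v \<in> C c"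
    for a b c
    using that by eventually_elim blast
  fix u assume u: "u \<in> f -` {f x}"
  show "\<exists>T. openin (top_of_set (f -` {f x})) T \<and> u \<in> T \<and>
      (\<forall>u'\<in>T. \<forall>\<^sub>F v in nhds (f x). v \<in> C u \<longleftrightarrow> v \<in> C u')"
  proof (intro exI conjI ballI)
    show "openin (top_of_set (f -` {f x})) (f -` {f x} \<inter> N u)"
      using open_chart by (rule openin_open_Int)
    show "u \<in> f -` {f x} \<inter> N u"
      using u in_chart by simp
    fix u' assume "u' \<in> f -` {f x} \<inter> N u"
    with u show "\<forall>\<^sub>F v in nhds (f x). v \<in> C u \<longleftrightarrow> v \<in> C u'"
      using eventually_chart_cones_eq[of u' u] by simp
  qed
qed

lemma eventually_image_imp_chart_cone:
  assumes cont: "continuous_on UNIV f" and fibres: "\<And>v. connected (f -` {v})"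
    and closed: "closed_map euclidean (top_of_set (range f)) f"
  shows "\<forall>\<^sub>F v in nhds (f x). v \<in> range f \<longrightarrow> v \<in> C x"
proof -
  let ?F = "f -` {f x}"
  have "\<forall>x'\<in>?F. \<exists>U. open U \<and> f x \<in> U \<and> (\<forall>v\<in>U. v \<in> C x \<longleftrightarrow> v \<in> C x')"
    using eventually_chart_cones_eq_on_fibre[OF fibres] unfolding eventually_nhds by simp
  from bchoice[OF this] obtain U where U: "\<forall>x'\<in>?F.
      open (U x') \<and> f x \<in> U x' \<and> (\<forall>v\<in>U x'. v \<in> C x \<longleftrightarrow> v \<in> C x')"
    by blast
  define W where "W = (\<Union>x'\<in>?F. N x' \<inter> f -` U x')"
  have "open (N x' \<inter> f -` U x')" if "x' \<in> ?F" for x'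
    using U that open_chart cont by (intro open_Int open_vimage) auto
  then have "openin euclidean W"
    unfolding W_def open_openin[symmetric] by blast
  moreover have "{x' \<in> topspace euclidean. f x' = f x} \<subseteq> W"
    unfolding W_def using U in_chart by auto
  moreover have "f x \<in> topspace (top_of_set (range f))"
    by simp
  ultimately obtain V where V: "openin (top_of_set (range f)) V" "f x \<in> V"
    "{x' \<in> topspace euclidean. f x' \<in> V} \<subseteq> W"
    using closed unfolding closed_map_fibre_neighbourhood by blast
  then obtain V' where V': "open V'" "V = range f \<inter> V'"
    unfolding openin_open by blast
  have "f ` W \<subseteq> C x"
    unfolding W_def using U image_chart_subset by blast
  with V V' have "\<forall>v\<in>V'. v \<in> range f \<longrightarrow> v \<in> C x"
    by auto
  with V V' show ?thesis
    unfolding eventually_nhds by blast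
qed

lemma eventually_image_eq_chart_cone:
  assumes "continuous_on UNIV f" "\<And>v. connected (f -` {v})"
    and "closed_map euclidean (top_of_set (range f)) f"
  shows "\<forall>\<^sub>F v in nhds (f x). v \<in> range f \<longleftrightarrow> v \<in> C x"
proof -
  have "nbhd_in euclidean (N x) x"
    unfolding nbhd_in_def using open_chart in_chart by (auto simp: open_openin[symmetric])
  then obtain W where W: "openin (top_of_set (C x)) W" "f x \<in> W" "W \<subseteq> f ` N x"
    using image_nhd[of "N x" x] unfolding nbhd_in_def by blast
  then obtain U where U: "open U" "W = C x \<inter> U"
    unfolding openin_open by blast
  with W have "\<forall>\<^sub>F v in nhds (f x). v \<in> C x \<longrightarrow> v \<in> range f"
    unfolding eventually_nhds by blast
  with eventually_image_imp_chart_cone[OF assms] show ?thesis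
    by eventually_elim blast
qed

lemma open_map_onto_image:
  assumes "continuous_on UNIV f" "\<And>v. connected (f -` {v})"
    and "closed_map euclidean (top_of_set (range f)) f"
  shows "open_map euclidean (top_of_set (range f)) f"
  unfolding open_map_def
proof (intro allI impI)
  fix U :: "'x set" assume "openin euclidean U"
  show "openin (top_of_set (range f)) (f ` U)"
    unfolding openin_subopen[of _ "f ` U"]
  proof
    fix y assume "y \<in> f ` U"
    then obtain x where x: "x \<in> U" "y = f x"
      by blast
    have "nbhd_in euclidean (U \<inter> N x) x"
      unfolding nbhd_in_def using \<open>openin euclidean U\<close> open_chart in_chart x(1)
      by (intro exI[of _ "U \<inter> N x"]) (auto simp: open_openin[symmetric])
    then obtain W where W: "openin (top_of_set (C x)) W" "f x \<in> W" "W \<subseteq> f ` (U \<inter> N x)"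
      using image_nhd[of "U \<inter> N x" x] unfolding nbhd_in_def by blast
    then obtain U2 where U2: "open U2" "W = C x \<inter> U2"
      unfolding openin_open by blast
    obtain U1 where U1: "open U1" "f x \<in> U1" "\<forall>v\<in>U1. v \<in> range f \<longrightarrow> v \<in> C x"
      using eventually_image_imp_chart_cone[OF assms, of x] unfolding eventually_nhds by blast
    show "\<exists>T. openin (top_of_set (range f)) T \<and> y \<in> T \<and> T \<subseteq> f ` U"
    proof (intro exI conjI)
      show "openin (top_of_set (range f)) (range f \<inter> (U1 \<inter> U2))"
        using U1(1) U2(1) by (intro openin_open_Int open_Int)
      show "y \<in> range f \<inter> (U1 \<inter> U2)"
        using x U1(2) U2(2) W(2) by auto
      show "range f \<inter> (U1 \<inter> U2) \<subseteq> f ` U"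
        using U1(3) U2(2) W(3) by blast
    qed
  qed
qed

end

theorem corollary2p17:
  fixes f :: "'x::t2_space \<Rightarrow> 'v::{real_vector,t2_space}"
  assumes "locally_convex_tvs TYPE('v)"
    and "connected (UNIV :: 'x set)"
    and "locally connected (UNIV :: 'x set)"
    and "continuous_on UNIV f"
    and "local_convexity_data f"
    and "\<And>v. connected (f -` {v})"
    and "closed_map euclidean (top_of_set (range f)) f"
  shows "open_map euclidean (top_of_set (range f)) f \<and> locally_convex_set (range f) \<and>
         (closed (range f) \<longrightarrow> convex (range f))"
proof -
  obtain N C where "cone_charts f N C"
    using local_convexity_data_imp_cone_charts[OF assms(5)] by blast
  then interpret cone_charts f N C .
  interpret image: locally_conic "range f" "\<lambda>v. C (inv f v)"
  proof
    show "locally_convex_tvs TYPE('v)"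
      by (rule assms(1))
  next
    fix y assume "y \<in> range f"
    then show "convex_cone_with_vertex (C (inv f y)) y"
      using chart_cone[of "inv f y"] by (simp add: f_inv_into_f)
  next
    fix y assume "y \<in> range f"
    then show "\<forall>\<^sub>F v in nhds y. v \<in> range f \<longleftrightarrow> v \<in> C (inv f y)"
      using eventually_image_eq_chart_cone[OF assms(4,6,7), of "inv f y"] by (simp add: f_inv_into_f)
  qed
  have "connected (range f)"
    using connected_continuous_image[OF assms(4,2)] .
  with open_map_onto_image[OF assms(4,6,7)] image.locally_convex image.convex_if_closed_connected
  show ?thesis
    by blast
qed

end
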